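(* Consider the Cucker–Smale model with bonding force $$\dot{\mathbf{x}}_i=\mathbf{v}_i,\qquad \dot{\mathbf{v}}_i=\frac{\kappa_0}{N}\sum_{j=1}^N\psi(\|\mathbf{x}_j-\mathbf{x}_i\|)(\mathbf{v}_j-\mathbf{v}_i)+\frac{\kappa_1}{N}\sum_{j\ne i}\Big\langle\mathbf{v}_j-\mathbf{v}_i,\frac{\mathbf{x}_j-\mathbf{x}_i}{\|\mathbf{x}_j-\mathbf{x}_i\|}\Big\rangle\frac{\mathbf{x}_j-\mathbf{x}_i}{\|\mathbf{x}_j-\mathbf{x}_i\|}+\frac{\kappa_2}{N}\sum_{j\ne i}\big(\|\mathbf{x}_j-\mathbf{x}_i\|-d^\infty_{ij}\big)\frac{\mathbf{x}_j-\mathbf{x}_i}{\|\mathbf{x}_j-\mathbf{x}_i\|}.$$ Suppose $$\min_{i\ne j}\|\mathbf{x}_i^0-\mathbf{x}_j^0\|>0,\quad \min_{i\ne j}d^\infty_{ij}>\sqrt{\frac{2NE(0)}{\kappa_2}},\quad (X^0,V^0)\in S,\quad \kappa_0>0,\ \kappa_1>0,\ \kappa_2>0,$$ and let $\{(\mathbf{x}_i,\mathbf{v}_i)\}$ be a global smooth solution. Then: (i) $\sup_{0\le t<\infty}\max_{i,j}\|\mathbf{x}_i(t)-\mathbf{x}_j(t)\|<\infty$ and $\lim_{t\to\infty}\max_{i,j}\|\mathbf{v}_j(t)-\mathbf{v}_i(t)\|=0$; (ii) if $\sum_{i=1}^N\mathbf{v}_i^0=0$, then $\lim_{t\to\infty}\max_{1\le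 i\le N}\|\mathbf{v}_i(t)\|=0$.
   Context: $N\ge2$, $d\ge1$, Euclidean norm and inner product on $\mathbb{R}^d$; $[d^\infty_{ij}]$ real symmetric with zero diagonal; $(X^0,V^0)=(\mathbf{x}_i(0),\mathbf{v}_i(0))_i$. $E:=\frac12\sum_i\|\mathbf{v}_i\|^2+\frac{\kappa_2}{4N}\sum_{i,j}(\|\mathbf{x}_j-\mathbf{x}_i\|-d^\infty_{ij})^2$. $U:=\max_{i\ne j}d^\infty_{ij}+\sqrt{2NE(0)/\kappa_2}$, $S:=\{(X,V)\in\mathbb{R}^{2dN}:\max_{i\ne j}\|\mathbf{x}_i-\mathbf{x}_j\|\le U\}$. The weight $\psi:[0,\infty)\to[0,\infty)$ is locally Lipschitz with $0\le\psi(r)\le\psi_M$ for all $r\ge0$ and $\psi_m:=\min_{r\in[0,U]}\psi(r)>0$. A global smooth solution is a $C^1$ solution on $[0,\infty)$ with $\mathbf{x}_i(t)\ne\mathbf{x}_j(t)$ for $i\ne j$. *)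

theory Defs
  imports "HOL-Analysis.Analysis"
begin

text \<open>Unit direction from x_i to x_j (only used for i \<noteq> j, where positions differ).\<close>
definition unitdir :: "'a::euclidean_space \<Rightarrow> 'a \<Rightarrow> 'a" where
  "unitdir xi xj = (1 / norm (xj - xi)) *\<^sub>R (xj - xi)"

text \<open>Right-hand side of the velocity equation for agent i. Agents are indexed by 0..N-1.\<close>
definition CS_force ::
  "nat \<Rightarrow> real \<Rightarrow> real \<Rightarrow> real \<Rightarrow> (real \<Rightarrow> real) \<Rightarrow> (nat \<Rightarrow> nat \<Rightarrow> real)
   \<Rightarrow> (nat \<Rightarrow> 'a::euclidean_space) \<Rightarrow> (nat \<Rightarrow> 'a) \<Rightarrow> nat \<Rightarrow> 'a" where
  "CS_force N k0 k1 k2 \<psi> dinf X V i =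
     (k0 / real N) *\<^sub>R (\<Sum>j<N. \<psi> (norm (X j - X i)) *\<^sub>R (V j - V i))
   + (k1 / real N) *\<^sub>R (\<Sum>j\<in>{..<N} - {i}.
        ((V j - V i) \<bullet> unitdir (X i) (X j)) *\<^sub>R unitdir (X i) (X j))
   + (k2 / real N) *\<^sub>R (\<Sum>j\<in>{..<N} - {i}.
        (norm (X j - X i) - dinf i j) *\<^sub>R unitdir (X i) (X j))"

definition CS_energy ::
  "nat \<Rightarrow> real \<Rightarrow> (nat \<Rightarrow> nat \<Rightarrow> real) \<Rightarrow> (nat \<Rightarrow> 'a::euclidean_space) \<Rightarrow> (nat \<Rightarrow> 'a) \<Rightarrow> real" where
  "CS_energy N k2 dinf X V =
     (1/2) * (\<Sum>i<N. (norm (V i))\<^sup>2)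
   + (k2 / (4 * real N)) * (\<Sum>i<N. \<Sum>j<N. (norm (X j - X i) - dinf i j)\<^sup>2)"

definition CS_global_smooth_solution ::
  "nat \<Rightarrow> real \<Rightarrow> real \<Rightarrow> real \<Rightarrow> (real \<Rightarrow> real) \<Rightarrow> (nat \<Rightarrow> nat \<Rightarrow> real)
   \<Rightarrow> (nat \<Rightarrow> real \<Rightarrow> 'a::euclidean_space) \<Rightarrow> (nat \<Rightarrow> real \<Rightarrow> 'a) \<Rightarrow> bool" where
  "CS_global_smooth_solution N k0 k1 k2 \<psi> dinf x v \<longleftrightarrow>
     (\<forall>i<N. \<forall>t\<ge>0.
        (x i has_vector_derivative v i t) (at t within {0..}) \<and>
        (v i has_vector_derivative
           CS_force N k0 k1 k2 \<psi> dinf (\<lambda>j. x j t) (\<lambda>j. v j t) i) (at t within {0..})) \<and>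
     (\<forall>i<N. continuous_on {0..} (v i) \<and>
        continuous_on {0..} (\<lambda>t. CS_force N k0 k1 k2 \<psi> dinf (\<lambda>j. x j t) (\<lambda>j. v j t) i)) \<and>
     (\<forall>t\<ge>0. \<forall>i<N. \<forall>j<N. i \<noteq> j \<longrightarrow> x i t \<noteq> x j t)"

definition locally_lipschitz_nonneg :: "(real \<Rightarrow> real) \<Rightarrow> bool" where
  "locally_lipschitz_nonneg f \<longleftrightarrow>
     (\<forall>r\<ge>0. \<exists>\<delta>>0. \<exists>L. \<forall>a\<in>{0..} \<inter> cball r \<delta>. \<forall>b\<in>{0..} \<inter> cball r \<delta>.
        \<bar>f a - f b\<bar> \<le> L * \<bar>a - b\<bar>)"

end

theory Submission
  imports Defs
begin

(*
  Along a solution the energy E is non-increasing: the pairwise interaction forces are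
  antisymmetric, so the bond terms of dE/dt cancel and what remains is
  -(1/2N) sum_ij (k0 psi(|x_j - x_i|) |v_j - v_i|^2 + k1 <v_j - v_i, e_ij>^2) <= 0.
  Each pair (i,j) appears twice in the bond potential, so | |x_j - x_i| - d_ij | never exceeds
  sqrt(2 N E(0) / k2); hence all distances stay below U, psi stays above psi_m, and
  dE/dt <= -(k0 psi_m / 2N) |v_j - v_i|^2 for every pair. The energy also bounds velocities and
  bond deviations, hence the accelerations, so relative velocities are uniformly Lipschitz, and a
  Barbalat-type argument forces them to 0. Antisymmetry also conserves total momentum; when it
  vanishes, N v_i is the sum of the v_i - v_j, which tends to 0.
*)

lemma unitdir_swap: "unitdir b a = - unitdir a b"
  unfolding unitdir_def by (simp add: norm_minus_commute scaleR_diff_right)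

lemma unitdir_self [simp]: "unitdir a a = 0"
  unfolding unitdir_def by simp

lemma norm_unitdir_le: "norm (unitdir a b) \<le> 1"
  unfolding unitdir_def by (cases "a = b") auto

lemma unitdir_eq_sgn: "unitdir a b = sgn (b - a)"
  unfolding unitdir_def sgn_div_norm by (simp add: divide_inverse_commute)

definition CS_pair_force ::
  "nat \<Rightarrow> real \<Rightarrow> real \<Rightarrow> real \<Rightarrow> (real \<Rightarrow> real) \<Rightarrow> (nat \<Rightarrow> nat \<Rightarrow> real)
   \<Rightarrow> (nat \<Rightarrow> 'a::euclidean_space) \<Rightarrow> (nat \<Rightarrow> 'a) \<Rightarrow> nat \<Rightarrow> nat \<Rightarrow> 'a" where
  "CS_pair_force N k0 k1 k2 \<psi> dinf X V i j =
     (k0 / real N) *\<^sub>R (\<psi> (norm (X j - X i)) *\<^sub>R (V j - V i))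
   + (k1 / real N) *\<^sub>R (((V j - V i) \<bullet> unitdir (X i) (X j)) *\<^sub>R unitdir (X i) (X j))
   + (k2 / real N) *\<^sub>R ((norm (X j - X i) - dinf i j) *\<^sub>R unitdir (X i) (X j))"

lemma CS_pair_force_self [simp]: "CS_pair_force N k0 k1 k2 \<psi> dinf X V i i = 0"
  unfolding CS_pair_force_def by simp

lemma CS_force_eq_sum_pair_force:
  assumes "i < N"
  shows "CS_force N k0 k1 k2 \<psi> dinf X V i = (\<Sum>j<N. CS_pair_force N k0 k1 k2 \<psi> dinf X V i j)"
  unfolding CS_force_def CS_pair_force_def
  using assms by (simp add: sum_diff1 sum.distrib scaleR_sum_right)

lemma CS_pair_force_antisym:
  assumes "dinf i j = dinf j i"
  shows "CS_pair_force N k0 k1 k2 \<psi> dinf X V j i = - CS_pair_force N k0 k1 k2 \<psi> dinf X V i j"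
proof -
  have "norm (X i - X j) = norm (X j - X i)"
    by (rule norm_minus_commute)
  moreover have "V i - V j = - (V j - V i)"
    by simp
  ultimately show ?thesis
    unfolding CS_pair_force_def unitdir_swap[of "X i" "X j"] assms by (simp add: algebra_simps)
qed

lemma sum_sum_antisym_eq_0:
  fixes w :: "'i \<Rightarrow> 'i \<Rightarrow> 'a::real_vector"
  assumes "\<And>i j. i \<in> A \<Longrightarrow> j \<in> A \<Longrightarrow> w j i = - w i j"
  shows "(\<Sum>i\<in>A. \<Sum>j\<in>A. w i j) = 0"
proof -
  have "(\<Sum>i\<in>A. \<Sum>j\<in>A. w i j) = (\<Sum>j\<in>A. \<Sum>i\<in>A. - w j i)"
    by (subst sum.swap) (intro sum.cong refl assms)
  also have "\<dots> = - (\<Sum>i\<in>A. \<Sum>j\<in>A. w i j)"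
    by (simp add: sum_negf)
  finally show ?thesis
    by (simp add: eq_neg_iff_add_eq_0 flip: scaleR_2)
qed

lemma sum_inner_sum_antisym:
  fixes w :: "'i \<Rightarrow> 'i \<Rightarrow> 'a::real_inner"
  assumes "\<And>i j. i \<in> A \<Longrightarrow> j \<in> A \<Longrightarrow> w j i = - w i j"
  shows "(\<Sum>i\<in>A. V i \<bullet> (\<Sum>j\<in>A. w i j)) = - (1/2) * (\<Sum>i\<in>A. \<Sum>j\<in>A. (V j - V i) \<bullet> w i j)"
proof -
  have "(\<Sum>i\<in>A. \<Sum>j\<in>A. V j \<bullet> w i j) = (\<Sum>i\<in>A. \<Sum>j\<in>A. - (V i \<bullet> w i j))"
    by (subst sum.swap) (intro sum.cong refl; metis assms inner_minus_right)
  then show ?thesis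
    by (simp add: inner_diff_left inner_sum_right sum_subtractf sum_negf)
qed

lemma inner_CS_pair_force:
  "(V j - V i) \<bullet> CS_pair_force N k0 k1 k2 \<psi> dinf X V i j =
     (k0 / real N) * (\<psi> (norm (X j - X i)) * (norm (V j - V i))\<^sup>2)
   + (k1 / real N) * ((V j - V i) \<bullet> unitdir (X i) (X j))\<^sup>2
   + (k2 / real N) * ((norm (X j - X i) - dinf i j) * ((V j - V i) \<bullet> unitdir (X i) (X j)))"
  unfolding CS_pair_force_def power2_eq_square
  by (simp add: inner_add_right mult.assoc flip: power2_eq_square power2_norm_eq_inner)

definition CS_dissipation ::
  "nat \<Rightarrow> real \<Rightarrow> real \<Rightarrow> (real \<Rightarrow> real) \<Rightarrow> (nat \<Rightarrow> 'a::euclidean_space) \<Rightarrow> (nat \<Rightarrow> 'a) \<Rightarrow> real" where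
  "CS_dissipation N k0 k1 \<psi> X V =
     (1 / (2 * real N)) * (\<Sum>i<N. \<Sum>j<N. k0 * \<psi> (norm (X j - X i)) * (norm (V j - V i))\<^sup>2
                                       + k1 * ((V j - V i) \<bullet> unitdir (X i) (X j))\<^sup>2)"

lemma CS_power_balance:
  assumes "\<forall>i<N. \<forall>j<N. dinf i j = dinf j i"
  shows "(\<Sum>i<N. V i \<bullet> CS_force N k0 k1 k2 \<psi> dinf X V i)
     + (k2 / (2 * real N)) * (\<Sum>i<N. \<Sum>j<N. (norm (X j - X i) - dinf i j)
                                              * ((V j - V i) \<bullet> unitdir (X i) (X j)))
   = - CS_dissipation N k0 k1 \<psi> X V"
proof -
  let ?F = "CS_pair_force N k0 k1 k2 \<psi> dinf X V"
  define d where "d i j = k0 * \<psi> (norm (X j - X i)) * (norm (V j - V i))\<^sup>2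
                         + k1 * ((V j - V i) \<bullet> unitdir (X i) (X j))\<^sup>2" for i j
  define c where
    "c i j = (norm (X j - X i) - dinf i j) * ((V j - V i) \<bullet> unitdir (X i) (X j))" for i j
  have pointwise: "(V j - V i) \<bullet> ?F i j = (1 / real N) * d i j + (k2 / real N) * c i j" for i j
    unfolding inner_CS_pair_force d_def c_def by (simp add: add_divide_distrib ring_distribs)
  have "(\<Sum>i<N. V i \<bullet> CS_force N k0 k1 k2 \<psi> dinf X V i) = (\<Sum>i<N. V i \<bullet> (\<Sum>j<N. ?F i j))"
    by (simp add: CS_force_eq_sum_pair_force)
  also have "\<dots> = - (1/2) * (\<Sum>i<N. \<Sum>j<N. (V j - V i) \<bullet> ?F i j)"
    using assms by (intro sum_inner_sum_antisym CS_pair_force_antisym) auto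
  also have "\<dots> = - (1/2) * ((1 / real N) * (\<Sum>i<N. \<Sum>j<N. d i j)
                              + (k2 / real N) * (\<Sum>i<N. \<Sum>j<N. c i j))"
    unfolding pointwise by (simp only: sum_distrib_left flip: sum.distrib)
  finally show ?thesis
    unfolding CS_dissipation_def d_def [symmetric] c_def [symmetric] by (simp add: algebra_simps)
qed

lemma sum_CS_force_eq_0:
  assumes "\<forall>i<N. \<forall>j<N. dinf i j = dinf j i"
  shows "(\<Sum>i<N. CS_force N k0 k1 k2 \<psi> dinf X V i) = 0"
proof -
  have "(\<Sum>i<N. CS_force N k0 k1 k2 \<psi> dinf X V i)
      = (\<Sum>i<N. \<Sum>j<N. CS_pair_force N k0 k1 k2 \<psi> dinf X V i j)"
    by (simp add: CS_force_eq_sum_pair_force)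
  also have "\<dots> = 0"
    using assms by (intro sum_sum_antisym_eq_0 CS_pair_force_antisym) auto
  finally show ?thesis .
qed

lemma member_le_double_sum:
  fixes a :: "'i \<Rightarrow> 'j \<Rightarrow> 'b::{semiring_1, ordered_comm_monoid_add}"
  assumes "finite A" "finite B" "\<And>i j. i \<in> A \<Longrightarrow> j \<in> B \<Longrightarrow> 0 \<le> a i j" "i \<in> A" "j \<in> B"
  shows "a i j \<le> (\<Sum>i\<in>A. \<Sum>j\<in>B. a i j)"
proof -
  have "a i j \<le> (\<Sum>j\<in>B. a i j)"
    using assms by (intro member_le_sum) auto
  also have "\<dots> \<le> (\<Sum>i\<in>A. \<Sum>j\<in>B. a i j)"
    using assms by (intro member_le_sum[of _ _ "\<lambda>i. \<Sum>j\<in>B. a i j"] sum_nonneg) auto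
  finally show ?thesis .
qed

lemma pair_le_double_sum:
  fixes a :: "'i \<Rightarrow> 'i \<Rightarrow> 'b::ordered_comm_monoid_add"
  assumes "finite A" "\<And>i j. i \<in> A \<Longrightarrow> j \<in> A \<Longrightarrow> 0 \<le> a i j" "i \<in> A" "j \<in> A" "i \<noteq> j"
  shows "a i j + a j i \<le> (\<Sum>i\<in>A. \<Sum>j\<in>A. a i j)"
proof -
  have "a i j + a j i = (\<Sum>(i, j)\<in>{(i, j), (j, i)}. a i j)"
    using assms(5) by simp
  also have "\<dots> \<le> (\<Sum>(i, j)\<in>A \<times> A. a i j)"
    using assms by (intro sum_mono2) auto
  also have "\<dots> = (\<Sum>i\<in>A. \<Sum>j\<in>A. a i j)"
    by (rule sum.cartesian_product [symmetric])
  finally show ?thesis .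
qed

lemma CS_energy_nonneg:
  assumes "0 \<le> k2"
  shows "0 \<le> CS_energy N k2 dinf X V"
  unfolding CS_energy_def using assms
  by (intro add_nonneg_nonneg mult_nonneg_nonneg sum_nonneg) auto

lemma norm_le_sqrt_CS_energy:
  assumes "0 \<le> k2" "i < N"
  shows "norm (V i) \<le> sqrt (2 * CS_energy N k2 dinf X V)"
proof -
  have "(norm (V i))\<^sup>2 \<le> (\<Sum>i<N. (norm (V i))\<^sup>2)"
    using assms(2) by (intro member_le_sum) auto
  also have "\<dots> \<le> 2 * CS_energy N k2 dinf X V"
    unfolding CS_energy_def using assms(1)
    by (auto intro!: mult_nonneg_nonneg divide_nonneg_nonneg sum_nonneg)
  finally show ?thesis
    by (rule real_le_rsqrt)
qed

lemma bond_deviation_le_sqrt_CS_energy: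
  assumes "0 < k2" "\<forall>i<N. \<forall>j<N. dinf i j = dinf j i" "i < N" "j < N" "i \<noteq> j"
  shows "\<bar>norm (X j - X i) - dinf i j\<bar> \<le> sqrt (2 * real N * CS_energy N k2 dinf X V / k2)"
proof -
  define P where "P i j = (norm (X j - X i) - dinf i j)\<^sup>2" for i j
  have "P j i = P i j"
    unfolding P_def using assms(2-4) by (simp add: norm_minus_commute)
  then have "2 * P i j \<le> (\<Sum>i<N. \<Sum>j<N. P i j)"
    using pair_le_double_sum[of "{..<N}" P i j] assms(3-5) by (simp add: P_def)
  also have "\<dots> \<le> 4 * real N * CS_energy N k2 dinf X V / k2"
    unfolding CS_energy_def P_def using assms(1,3)
    by (simp add: field_simps sum_nonneg)
  finally have "P i j \<le> 2 * real N * CS_energy N k2 dinf X V / k2"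
    by simp
  then show ?thesis
    unfolding P_def by (metis real_sqrt_abs real_sqrt_le_mono)
qed

lemma CS_dissipation_nonneg:
  assumes "\<forall>r\<ge>0. 0 \<le> \<psi> r" "0 \<le> k0" "0 \<le> k1"
  shows "0 \<le> CS_dissipation N k0 k1 \<psi> X V"
  unfolding CS_dissipation_def using assms
  by (intro mult_nonneg_nonneg sum_nonneg add_nonneg_nonneg) auto

lemma CS_dissipation_ge_pair:
  assumes "\<forall>r\<ge>0. 0 \<le> \<psi> r" "0 \<le> k0" "0 \<le> k1" "i < N" "j < N"
  shows "k0 * \<psi> (norm (X j - X i)) * (norm (V j - V i))\<^sup>2 / (2 * real N)
           \<le> CS_dissipation N k0 k1 \<psi> X V"
proof -
  let ?d = "\<lambda>i j. k0 * \<psi> (norm (X j - X i)) * (norm (V j - V i))\<^sup>2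
                   + k1 * ((V j - V i) \<bullet> unitdir (X i) (X j))\<^sup>2"
  have "k0 * \<psi> (norm (X j - X i)) * (norm (V j - V i))\<^sup>2 \<le> ?d i j"
    using assms(3) by simp
  also have "\<dots> \<le> (\<Sum>i<N. \<Sum>j<N. ?d i j)"
    using assms by (intro member_le_double_sum add_nonneg_nonneg mult_nonneg_nonneg) auto
  finally show ?thesis
    unfolding CS_dissipation_def by (simp add: divide_right_mono)
qed

lemma norm_CS_pair_force_le:
  assumes V: "norm (V j - V i) \<le> W" and X: "\<bar>norm (X j - X i) - dinf i j\<bar> \<le> R"
    and \<psi>: "0 \<le> \<psi> (norm (X j - X i))" "\<psi> (norm (X j - X i)) \<le> \<psi>M"
    and k: "0 \<le> k0" "0 \<le> k1" "0 \<le> k2"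
  shows "norm (CS_pair_force N k0 k1 k2 \<psi> dinf X V i j) \<le> (k0 * \<psi>M * W + k1 * W + k2 * R) / real N"
proof -
  let ?e = "unitdir (X i) (X j)"
  have e: "norm ?e \<le> 1"
    by (rule norm_unitdir_le)
  have align: "norm (\<psi> (norm (X j - X i)) *\<^sub>R (V j - V i)) \<le> \<psi>M * W"
    using \<psi> V by (simp add: mult_mono)
  have "norm (((V j - V i) \<bullet> ?e) *\<^sub>R ?e) \<le> norm (V j - V i) * norm ?e * norm ?e"
    by (simp add: Cauchy_Schwarz_ineq2 mult_right_mono)
  also have "\<dots> \<le> W"
    using e V by (simp add: mult_le_one order_trans[OF mult_left_le])
  finally have radial: "norm (((V j - V i) \<bullet> ?e) *\<^sub>R ?e) \<le> W" .
  have bond: "norm ((norm (X j - X i) - dinf i j) *\<^sub>R ?e) \<le> R"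
    using X e by (simp add: order_trans[OF mult_left_le])
  have "norm (CS_pair_force N k0 k1 k2 \<psi> dinf X V i j)
      \<le> norm ((k0 / real N) *\<^sub>R (\<psi> (norm (X j - X i)) *\<^sub>R (V j - V i)))
        + norm ((k1 / real N) *\<^sub>R (((V j - V i) \<bullet> ?e) *\<^sub>R ?e))
        + norm ((k2 / real N) *\<^sub>R ((norm (X j - X i) - dinf i j) *\<^sub>R ?e))"
    unfolding CS_pair_force_def by (intro norm_triangle_le add_right_mono norm_triangle_ineq)
  also have "\<dots> = k0 / real N * norm (\<psi> (norm (X j - X i)) *\<^sub>R (V j - V i))
        + k1 / real N * norm (((V j - V i) \<bullet> ?e) *\<^sub>R ?e)
        + k2 / real N * norm ((norm (X j - X i) - dinf i j) *\<^sub>R ?e)"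
    using k by (simp only: norm_scaleR abs_of_nonneg divide_nonneg_nonneg of_nat_0_le_iff)
  also have "\<dots> \<le> k0 / real N * (\<psi>M * W) + k1 / real N * W + k2 / real N * R"
    using align radial bond k by (intro add_mono mult_left_mono) auto
  finally show ?thesis
    by (simp add: add_divide_distrib)
qed

lemma norm_CS_force_le:
  assumes "i < N" and V: "\<forall>j<N. norm (V j - V i) \<le> W"
    and X: "\<forall>j<N. j \<noteq> i \<longrightarrow> \<bar>norm (X j - X i) - dinf i j\<bar> \<le> R" "0 \<le> R"
    and \<psi>: "\<forall>r\<ge>0. 0 \<le> \<psi> r \<and> \<psi> r \<le> \<psi>M"
    and k: "0 \<le> k0" "0 \<le> k1" "0 \<le> k2"
  shows "norm (CS_force N k0 k1 k2 \<psi> dinf X V i) \<le> k0 * \<psi>M * W + k1 * W + k2 * R"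
proof -
  let ?b = "k0 * \<psi>M * W + k1 * W + k2 * R"
  have "0 \<le> \<psi>M" "0 \<le> W"
    using \<psi> V \<open>i < N\<close> by force+
  then have "0 \<le> ?b"
    using k X(2) by simp
  then have pair: "norm (CS_pair_force N k0 k1 k2 \<psi> dinf X V i j) \<le> ?b / real N" if "j < N" for j
    using that V X \<psi> k by (cases "j = i") (auto intro!: norm_CS_pair_force_le)
  have "norm (CS_force N k0 k1 k2 \<psi> dinf X V i) \<le> (\<Sum>j<N. ?b / real N)"
    unfolding CS_force_eq_sum_pair_force[OF \<open>i < N\<close>] by (intro sum_norm_le pair) simp
  also have "\<dots> = ?b"
    using \<open>i < N\<close> by simp
  finally show ?thesis .
qed

lemma has_real_derivative_norm:
  fixes f :: "real \<Rightarrow> 'a::real_inner"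
  assumes "(f has_vector_derivative f') (at t within S)" "f t \<noteq> 0"
  shows "((\<lambda>t. norm (f t)) has_real_derivative f' \<bullet> sgn (f t)) (at t within S)"
  using has_derivative_compose[OF assms(1)[unfolded has_vector_derivative_def]
                                  has_derivative_norm[OF assms(2)]]
  by (simp add: has_field_derivative_def o_def mult_commute_abs)

lemma has_real_derivative_power2_norm:
  fixes f :: "real \<Rightarrow> 'a::real_inner"
  assumes "(f has_vector_derivative f') (at t within S)"
  shows "((\<lambda>t. (norm (f t))\<^sup>2) has_real_derivative 2 * (f t \<bullet> f')) (at t within S)"
  using has_derivative_inner[OF assms[unfolded has_vector_derivative_def]
                                assms[unfolded has_vector_derivative_def]]
  by (simp add: has_field_derivative_def power2_norm_eq_inner inner_commute algebra_simps
                mult_commute_abs)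

lemma DERIV_le_imp_diff_le_within:
  fixes f :: "real \<Rightarrow> real"
  assumes "a \<le> b" "{a..b} \<subseteq> S"
    and deriv: "\<And>s. s \<in> {a..b} \<Longrightarrow> (f has_real_derivative f' s) (at s within S)"
    and bound: "\<And>s. s \<in> {a..b} \<Longrightarrow> f' s \<le> B"
  shows "f b - f a \<le> B * (b - a)"
proof -
  let ?g = "\<lambda>s. f s - B * s"
  have g_deriv: "(?g has_real_derivative f' s - B) (at s within S)" if "s \<in> {a..b}" for s
    using deriv[OF that] by (auto intro!: derivative_eq_intros)
  have "?g b \<le> ?g a"
  proof (rule DERIV_nonpos_imp_decreasing_open[OF \<open>a \<le> b\<close>])
    fix s assume s: "a < s" "s < b"
    then have "s \<in> interior S"
      using interior_mono[OF \<open>{a..b} \<subseteq> S\<close>] by auto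
    then have "at s within S = at s"
      by (rule at_within_interior)
    then show "\<exists>y. DERIV ?g s :> y \<and> y \<le> 0"
      using g_deriv[of s] bound[of s] s by auto
  next
    have "continuous (at s within {a..b}) ?g" if "s \<in> {a..b}" for s
      using DERIV_continuous[OF g_deriv[OF that]] assms(2) by (rule continuous_within_subset)
    then show "continuous_on {a..b} ?g"
      by (simp add: continuous_on_eq_continuous_within)
  qed
  then show ?thesis
    by (simp add: algebra_simps)
qed

lemma has_vector_derivative_bound_imp_norm_diff_le:
  fixes g :: "real \<Rightarrow> 'a::real_normed_vector"
  assumes "a \<le> b" "{a..b} \<subseteq> S"
    and deriv: "\<And>s. s \<in> {a..b} \<Longrightarrow> (g has_vector_derivative g' s) (at s within S)"
    and bound: "\<And>s. s \<in> {a..b} \<Longrightarrow> norm (g' s) \<le> B"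
  shows "norm (g b - g a) \<le> B * (b - a)"
proof -
  have "norm (g b - g a) \<le> B * norm (b - a)"
  proof (rule differentiable_bound[where f' = "\<lambda>s h. h *\<^sub>R g' s"])
    fix s assume s: "s \<in> {a..b}"
    show "(g has_derivative (\<lambda>h. h *\<^sub>R g' s)) (at s within {a..b})"
      using has_vector_derivative_within_subset[OF deriv[OF s] assms(2)]
      unfolding has_vector_derivative_def .
    show "onorm (\<lambda>h. h *\<^sub>R g' s) \<le> B"
      using bound[OF s] by (simp add: onorm_scaleR_left[OF bounded_linear_ident] onorm_id)
  qed (use assms in auto)
  then show ?thesis
    using \<open>a \<le> b\<close> by simp
qed

lemma Lipschitz_dissipation_drop:
  fixes E D :: "real \<Rightarrow> real" and w :: "real \<Rightarrow> 'a::real_normed_vector"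
  assumes deriv: "\<And>s. 0 \<le> s \<Longrightarrow> (E has_real_derivative D s) (at s within {0..})"
    and dissipation: "\<And>s. 0 \<le> s \<Longrightarrow> D s \<le> - c * (norm (w s))\<^sup>2" and "0 \<le> c"
    and Lipschitz: "\<And>s. t \<le> s \<Longrightarrow> norm (w s - w t) \<le> K * (s - t)"
    and "0 \<le> t" "0 \<le> \<delta>" "0 \<le> K" "0 \<le> r" "r + K * \<delta> \<le> norm (w t)"
  shows "E (t + \<delta>) \<le> E t - c * r\<^sup>2 * \<delta>"
proof -
  have "E (t + \<delta>) - E t \<le> - (c * r\<^sup>2) * ((t + \<delta>) - t)"
  proof (rule DERIV_le_imp_diff_le_within[where S = "{0..}"])
    fix s assume s: "s \<in> {t..t + \<delta>}"
    then show "(E has_real_derivative D s) (at s within {0..})"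
      using \<open>0 \<le> t\<close> by (intro deriv) auto
    have "norm (w s - w t) \<le> K * \<delta>"
      using Lipschitz[of s] mult_left_mono[of "s - t" \<delta> K] s \<open>0 \<le> K\<close> by auto
    then have "r \<le> norm (w s)"
      using norm_triangle_ineq2[of "w t" "w s"] \<open>r + K * \<delta> \<le> norm (w t)\<close>
      by (simp add: norm_minus_commute)
    then have "c * r\<^sup>2 \<le> c * (norm (w s))\<^sup>2"
      using \<open>0 \<le> r\<close> \<open>0 \<le> c\<close> by (intro mult_left_mono power_mono) auto
    then show "D s \<le> - (c * r\<^sup>2)"
      using dissipation[of s] s \<open>0 \<le> t\<close> by simp
  qed (use assms in auto)
  then show ?thesis
    by (simp add: algebra_simps)
qed

(* Barbalat-type argument: once E is within c (eps/2)^2 delta of its infimum, |w| can no longer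
   reach eps, since by the Lipschitz bound it would stay >= eps/2 for a time delta and
   Lipschitz_dissipation_drop would push E below its infimum. *)
lemma Lipschitz_dissipated_tendsto_0:
  fixes E D :: "real \<Rightarrow> real" and w :: "real \<Rightarrow> 'a::real_normed_vector"
  assumes deriv: "\<And>t. 0 \<le> t \<Longrightarrow> (E has_real_derivative D t) (at t within {0..})"
    and dissipation: "\<And>t. 0 \<le> t \<Longrightarrow> D t \<le> - c * (norm (w t))\<^sup>2" and "0 < c"
    and bounded: "\<And>t. 0 \<le> t \<Longrightarrow> L \<le> E t"
    and Lipschitz: "\<And>s t. 0 \<le> s \<Longrightarrow> s \<le> t \<Longrightarrow> norm (w t - w s) \<le> K * (t - s)"
  shows "(w \<longlongrightarrow> 0) at_top"
proof (rule tendstoI)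
  fix \<epsilon> :: real assume "0 < \<epsilon>"
  have "0 \<le> K"
    using Lipschitz[of 0 1] norm_ge_zero[of "w 1 - w 0"] by (simp del: norm_ge_zero)
  have "D t \<le> 0" if "0 \<le> t" for t
  proof -
    have "0 \<le> c * (norm (w t))\<^sup>2"
      using \<open>0 < c\<close> by simp
    then show ?thesis
      using dissipation[OF that] by linarith
  qed
  then have decreasing: "E t \<le> E s" if "0 \<le> s" "s \<le> t" for s t
    using DERIV_le_imp_diff_le_within[of s t "{0..}" E D 0] deriv that by auto
  define I where "I = Inf (E ` {0..})"
  have "bdd_below (E ` {0..})"
    using bounded by (intro bdd_belowI2[of _ L]) auto
  then have I: "I \<le> E t" if "0 \<le> t" for t
    unfolding I_def using that by (auto intro: cInf_lower)
  define \<delta> where "\<delta> = \<epsilon> / (2 * K + 1)"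
  have "0 < \<delta>" "\<epsilon> / 2 + K * \<delta> \<le> \<epsilon>"
    using \<open>0 \<le> K\<close> \<open>0 < \<epsilon>\<close> by (auto simp: \<delta>_def field_simps)
  have "0 < c * (\<epsilon> / 2)\<^sup>2 * \<delta>"
    using \<open>0 < c\<close> \<open>0 < \<epsilon>\<close> \<open>0 < \<delta>\<close> by simp
  then obtain T where "0 \<le> T" "E T < I + c * (\<epsilon> / 2)\<^sup>2 * \<delta>"
    using cInf_lessD[of "E ` {0..}" "I + c * (\<epsilon> / 2)\<^sup>2 * \<delta>"] unfolding I_def by auto
  have "norm (w t) < \<epsilon>" if "T \<le> t" for t
  proof (rule ccontr)
    assume "\<not> norm (w t) < \<epsilon>"
    then have "E (t + \<delta>) \<le> E t - c * (\<epsilon> / 2)\<^sup>2 * \<delta>"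
      using deriv dissipation Lipschitz \<open>0 \<le> T\<close> \<open>T \<le> t\<close> \<open>0 < \<delta>\<close> \<open>0 \<le> K\<close> \<open>0 < \<epsilon>\<close> \<open>0 < c\<close>
        \<open>\<epsilon> / 2 + K * \<delta> \<le> \<epsilon>\<close>
      by (intro Lipschitz_dissipation_drop[where D = D and w = w and K = K]) auto
    moreover have "E t \<le> E T" "I \<le> E (t + \<delta>)"
      using decreasing I \<open>0 \<le> T\<close> \<open>T \<le> t\<close> \<open>0 < \<delta>\<close> by auto
    ultimately show False
      using \<open>E T < I + c * (\<epsilon> / 2)\<^sup>2 * \<delta>\<close> by linarith
  qed
  then show "\<forall>\<^sub>F t in at_top. dist (w t) 0 < \<epsilon>"
    unfolding eventually_at_top_linorder by auto
qed

lemma tendsto_Max_image: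
  fixes f :: "'i \<Rightarrow> 'b \<Rightarrow> 'c::linorder_topology"
  assumes "finite I" "I \<noteq> {}" "\<And>i. i \<in> I \<Longrightarrow> ((\<lambda>t. f i t) \<longlongrightarrow> l) F"
  shows "((\<lambda>t. Max ((\<lambda>i. f i t) ` I)) \<longlongrightarrow> l) F"
  using assms
proof (induction I rule: finite_ne_induct)
  case (insert i I)
  then have "((\<lambda>t. max (f i t) (Max ((\<lambda>i. f i t) ` I))) \<longlongrightarrow> max l l) F"
    by (intro tendsto_max) auto
  then show ?case
    using insert.hyps by simp
qed simp

lemma pair_setcompr_eq_image:
  "{f i j | i j. i < (N::nat) \<and> j < N} = (\<lambda>p. f (fst p) (snd p)) ` ({..<N} \<times> {..<N})"
  by force

lemma finite_pair_setcompr: "finite {f i j | i j. i < (N::nat) \<and> j < N \<and> P i j}"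
  by (rule finite_subset[of _ "(\<lambda>p. f (fst p) (snd p)) ` ({..<N} \<times> {..<N})"]) force+

lemma Max_pair_setcompr_le:
  assumes "0 < N" "\<And>i j. i < N \<Longrightarrow> j < N \<Longrightarrow> f i j \<le> B"
  shows "Max {f i j | i j. i < (N::nat) \<and> j < N} \<le> B"
  using assms unfolding pair_setcompr_eq_image by (subst Max_le_iff) auto

lemma tendsto_Max_pair_setcompr:
  fixes f :: "nat \<Rightarrow> nat \<Rightarrow> 'b \<Rightarrow> 'c::linorder_topology"
  assumes "0 < N" "\<And>i j. i < N \<Longrightarrow> j < N \<Longrightarrow> ((\<lambda>t. f i j t) \<longlongrightarrow> l) F"
  shows "((\<lambda>t. Max {f i j t | i j. i < N \<and> j < N}) \<longlongrightarrow> l) F"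
  unfolding pair_setcompr_eq_image
  using assms by (intro tendsto_Max_image) auto

lemma card_mult_norm_le_sum_norm_diff:
  fixes v :: "'i \<Rightarrow> 'a::real_normed_vector"
  assumes "finite A" "(\<Sum>j\<in>A. v j) = 0"
  shows "real (card A) * norm (v i) \<le> (\<Sum>j\<in>A. norm (v i - v j))"
proof -
  have "(\<Sum>j\<in>A. v i - v j) = real (card A) *\<^sub>R v i"
    using assms by (simp add: sum_subtractf sum_constant_scaleR)
  then have "real (card A) * norm (v i) = norm (\<Sum>j\<in>A. v i - v j)"
    by simp
  also have "\<dots> \<le> (\<Sum>j\<in>A. norm (v i - v j))"
    by (rule norm_sum)
  finally show ?thesis .
qed

locale CS_solution =
  fixes N :: nat and k0 k1 k2 \<psi>M :: real and \<psi> :: "real \<Rightarrow> real"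
    and dinf :: "nat \<Rightarrow> nat \<Rightarrow> real" and x v :: "nat \<Rightarrow> real \<Rightarrow> 'a::euclidean_space"
  assumes solution: "CS_global_smooth_solution N k0 k1 k2 \<psi> dinf x v"
    and dinf_sym: "\<forall>i<N. \<forall>j<N. dinf i j = dinf j i"
    and \<psi>_bounded: "\<forall>r\<ge>0. 0 \<le> \<psi> r \<and> \<psi> r \<le> \<psi>M"
    and k0_pos: "0 < k0" and k1_pos: "0 < k1" and k2_pos: "0 < k2"
begin

abbreviation energy :: "real \<Rightarrow> real" where
  "energy t \<equiv> CS_energy N k2 dinf (\<lambda>i. x i t) (\<lambda>i. v i t)"

abbreviation force :: "nat \<Rightarrow> real \<Rightarrow> 'a" where
  "force i t \<equiv> CS_force N k0 k1 k2 \<psi> dinf (\<lambda>j. x j t) (\<lambda>j. v j t) i"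

abbreviation dissipation :: "real \<Rightarrow> real" where
  "dissipation t \<equiv> CS_dissipation N k0 k1 \<psi> (\<lambda>j. x j t) (\<lambda>j. v j t)"

lemma x_has_derivative: "i < N \<Longrightarrow> 0 \<le> t \<Longrightarrow> (x i has_vector_derivative v i t) (at t within {0..})"
  and v_has_derivative: "i < N \<Longrightarrow> 0 \<le> t \<Longrightarrow> (v i has_vector_derivative force i t) (at t within {0..})"
  and no_collision: "i < N \<Longrightarrow> j < N \<Longrightarrow> i \<noteq> j \<Longrightarrow> 0 \<le> t \<Longrightarrow> x i t \<noteq> x j t"
  using solution unfolding CS_global_smooth_solution_def by auto

lemma bond_potential_has_derivative:
  assumes "0 \<le> t" "i < N" "j < N"
  shows "((\<lambda>t. (norm (x j t - x i t) - dinf i j)\<^sup>2) has_real_derivative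
           2 * (norm (x j t - x i t) - dinf i j) * ((v j t - v i t) \<bullet> unitdir (x i t) (x j t)))
         (at t within {0..})"
proof (cases "i = j")
  case False
  have "((\<lambda>t. x j t - x i t) has_vector_derivative v j t - v i t) (at t within {0..})"
    using assms by (intro has_vector_derivative_diff x_has_derivative)
  moreover have "x j t - x i t \<noteq> 0"
    using no_collision[of j i t] assms False by auto
  ultimately have "((\<lambda>t. norm (x j t - x i t)) has_real_derivative
                      (v j t - v i t) \<bullet> unitdir (x i t) (x j t)) (at t within {0..})"
    unfolding unitdir_eq_sgn by (rule has_real_derivative_norm)
  then show ?thesis
    by (auto intro!: derivative_eq_intros)
qed simp

lemma energy_has_derivative:
  assumes "0 \<le> t"
  shows "(energy has_real_derivative - dissipation t) (at t within {0..})"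
proof -
  let ?c = "\<lambda>i j. (norm (x j t - x i t) - dinf i j) * ((v j t - v i t) \<bullet> unitdir (x i t) (x j t))"
  have "(energy has_real_derivative
          (1/2) * (\<Sum>i<N. 2 * (v i t \<bullet> force i t))
          + k2 / (4 * real N) * (\<Sum>i<N. \<Sum>j<N. 2 * (norm (x j t - x i t) - dinf i j)
                                                * ((v j t - v i t) \<bullet> unitdir (x i t) (x j t))))
        (at t within {0..})"
    unfolding CS_energy_def using assms
    by (intro DERIV_add DERIV_cmult DERIV_sum has_real_derivative_power2_norm v_has_derivative
              bond_potential_has_derivative) auto
  also have "(1/2) * (\<Sum>i<N. 2 * (v i t \<bullet> force i t))
          + k2 / (4 * real N) * (\<Sum>i<N. \<Sum>j<N. 2 * (norm (x j t - x i t) - dinf i j)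
                                                * ((v j t - v i t) \<bullet> unitdir (x i t) (x j t)))
      = (\<Sum>i<N. v i t \<bullet> force i t) + k2 / (2 * real N) * (\<Sum>i<N. \<Sum>j<N. ?c i j)"
  proof -
    have "(\<Sum>i<N. \<Sum>j<N. 2 * (norm (x j t - x i t) - dinf i j)
                              * ((v j t - v i t) \<bullet> unitdir (x i t) (x j t)))
        = 2 * (\<Sum>i<N. \<Sum>j<N. ?c i j)"
      by (simp only: sum_distrib_left mult.assoc)
    moreover have "(1/2) * (\<Sum>i<N. 2 * (v i t \<bullet> force i t)) = (\<Sum>i<N. v i t \<bullet> force i t)"
      by (simp add: sum_distrib_left)
    ultimately show ?thesis
      by simp
  qed
  also have "\<dots> = - dissipation t"
    using dinf_sym by (rule CS_power_balance)
  finally show ?thesis .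
qed

lemma energy_nonneg: "0 \<le> energy t"
  using k2_pos by (intro CS_energy_nonneg) simp

lemma dissipation_nonneg: "0 \<le> dissipation t"
  using \<psi>_bounded k0_pos k1_pos by (intro CS_dissipation_nonneg) auto

lemma energy_decreasing:
  assumes "0 \<le> s" "s \<le> t"
  shows "energy t \<le> energy s"
proof -
  have "energy t - energy s \<le> 0 * (t - s)"
  proof (rule DERIV_le_imp_diff_le_within[where S = "{0..}"])
    fix r assume "r \<in> {s..t}"
    then show "(energy has_real_derivative - dissipation r) (at r within {0..})"
      using assms by (intro energy_has_derivative) auto
  qed (use assms dissipation_nonneg in auto)
  then show ?thesis
    by simp
qed

lemma norm_v_le:
  assumes "0 \<le> t" "i < N"
  shows "norm (v i t) \<le> sqrt (2 * energy 0)"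
proof -
  have "norm (v i t) \<le> sqrt (2 * energy t)"
    using k2_pos assms(2) by (intro norm_le_sqrt_CS_energy) auto
  also have "\<dots> \<le> sqrt (2 * energy 0)"
    using energy_decreasing[of 0 t] assms(1) by simp
  finally show ?thesis .
qed

lemma bond_deviation_le:
  assumes "0 \<le> t" "i < N" "j < N" "i \<noteq> j"
  shows "\<bar>norm (x j t - x i t) - dinf i j\<bar> \<le> sqrt (2 * real N * energy 0 / k2)"
proof -
  have "\<bar>norm (x j t - x i t) - dinf i j\<bar> \<le> sqrt (2 * real N * energy t / k2)"
    using k2_pos dinf_sym assms(2-4) by (rule bond_deviation_le_sqrt_CS_energy)
  also have "\<dots> \<le> sqrt (2 * real N * energy 0 / k2)"
    using energy_decreasing[of 0 t] assms(1) k2_pos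
    by (simp add: divide_right_mono mult_left_mono)
  finally show ?thesis .
qed

lemma v_Lipschitz:
  obtains K where "\<And>i s t. i < N \<Longrightarrow> 0 \<le> s \<Longrightarrow> s \<le> t \<Longrightarrow> norm (v i t - v i s) \<le> K * (t - s)"
proof
  define W where "W = 2 * sqrt (2 * energy 0)"
  define R where "R = sqrt (2 * real N * energy 0 / k2)"
  have "0 \<le> R"
    unfolding R_def using k2_pos energy_nonneg[of 0] by simp
  have force_bound: "norm (force i t) \<le> k0 * \<psi>M * W + k1 * W + k2 * R" if "i < N" "0 \<le> t" for i t
  proof (rule norm_CS_force_le)
    show "\<forall>j<N. norm (v j t - v i t) \<le> W"
    proof (intro allI impI)
      fix j assume "j < N"
      have "norm (v j t - v i t) \<le> norm (v j t) + norm (v i t)"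
        by (rule norm_triangle_ineq4)
      also have "\<dots> \<le> W"
        unfolding W_def using norm_v_le[of t j] norm_v_le[of t i] that \<open>j < N\<close> by simp
      finally show "norm (v j t - v i t) \<le> W" .
    qed
    show "\<forall>j<N. j \<noteq> i \<longrightarrow> \<bar>norm (x j t - x i t) - dinf i j\<bar> \<le> R"
      unfolding R_def using bond_deviation_le that by auto
  qed (use that \<open>0 \<le> R\<close> \<psi>_bounded k0_pos k1_pos k2_pos in auto)
  fix i :: nat and s t :: real assume "i < N" "0 \<le> s" "s \<le> t"
  then show "norm (v i t - v i s) \<le> (k0 * \<psi>M * W + k1 * W + k2 * R) * (t - s)"
    by (intro has_vector_derivative_bound_imp_norm_diff_le[where S = "{0..}" and g' = "force i"]
              v_has_derivative force_bound) auto
qed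

lemma momentum_conserved:
  assumes "0 \<le> t"
  shows "(\<Sum>i<N. v i t) = (\<Sum>i<N. v i 0)"
proof -
  have "((\<lambda>t. \<Sum>i<N. v i t) has_vector_derivative (\<Sum>i<N. force i s)) (at s within {0..})"
    if "s \<in> {0..}" for s
    using that by (intro has_vector_derivative_sum v_has_derivative) auto
  then have "((\<lambda>t. \<Sum>i<N. v i t) has_vector_derivative 0) (at s within {0..})" if "s \<in> {0..}" for s
    using that by (simp add: sum_CS_force_eq_0[OF dinf_sym])
  then obtain c where "\<And>s. s \<in> {0..} \<Longrightarrow> (\<Sum>i<N. v i s) = c"
    using has_vector_derivative_zero_constant[of "{0..}" "\<lambda>t. \<Sum>i<N. v i t"] by auto
  then show ?thesis
    using assms by force
qed

lemma relative_velocity_tendsto_0: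
  assumes "0 < \<psi>m" "\<forall>t\<ge>0. \<forall>i<N. \<forall>j<N. \<psi>m \<le> \<psi> (norm (x j t - x i t))" "i < N" "j < N"
  shows "((\<lambda>t. v j t - v i t) \<longlongrightarrow> 0) at_top"
proof -
  obtain K where K: "\<And>i s t. i < N \<Longrightarrow> 0 \<le> s \<Longrightarrow> s \<le> t \<Longrightarrow> norm (v i t - v i s) \<le> K * (t - s)"
    using v_Lipschitz by blast
  show ?thesis
  proof (rule Lipschitz_dissipated_tendsto_0)
    fix t :: real assume "0 \<le> t"
    show "(energy has_real_derivative - dissipation t) (at t within {0..})"
      using \<open>0 \<le> t\<close> by (rule energy_has_derivative)
    show "0 \<le> energy t"
      by (rule energy_nonneg)
    have "k0 * \<psi>m * (norm (v j t - v i t))\<^sup>2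
        \<le> k0 * \<psi> (norm (x j t - x i t)) * (norm (v j t - v i t))\<^sup>2"
      using assms \<open>0 \<le> t\<close> k0_pos by (intro mult_right_mono mult_left_mono) auto
    also have "\<dots> \<le> 2 * real N * dissipation t"
      using CS_dissipation_ge_pair[of \<psi> k0 k1 i N j] \<psi>_bounded k0_pos k1_pos assms(3,4)
      by (simp add: field_simps)
    finally show "- dissipation t \<le> - (k0 * \<psi>m / (2 * real N)) * (norm (v j t - v i t))\<^sup>2"
      using assms(3) by (simp add: field_simps)
  next
    show "0 < k0 * \<psi>m / (2 * real N)"
      using k0_pos assms by simp
  next
    fix s t :: real assume "0 \<le> s" "s \<le> t"
    then show "norm ((v j t - v i t) - (v j s - v i s)) \<le> 2 * K * (t - s)"
      using K[of j s t] K[of i s t] assms(3,4)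
        norm_triangle_ineq4[of "v j t - v j s" "v i t - v i s"]
      by (simp add: algebra_simps)
  qed
qed

lemma dist_le_max_bond:
  assumes "2 \<le> N" "sqrt (2 * real N * energy 0 / k2) < Min {dinf i j | i j. i < N \<and> j < N \<and> i \<noteq> j}"
    and "0 \<le> t" "i < N" "j < N"
  shows "norm (x j t - x i t)
           \<le> Max {dinf i j | i j. i < N \<and> j < N \<and> i \<noteq> j} + sqrt (2 * real N * energy 0 / k2)"
proof -
  define D where "D = {dinf i j | i j. i < N \<and> j < N \<and> i \<noteq> j}"
  have "finite D" "dinf 0 1 \<in> D"
    unfolding D_def using assms(1) finite_pair_setcompr by force+
  then have "Min D \<le> Max D"
    by (meson Min_le Max_ge order_trans)
  moreover have "0 \<le> sqrt (2 * real N * energy 0 / k2)"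
    using energy_nonneg[of 0] k2_pos by simp
  ultimately have "0 \<le> Max D"
    using assms(2) unfolding D_def by linarith
  show ?thesis
  proof (cases "i = j")
    case True
    then show ?thesis
      using \<open>0 \<le> Max D\<close> \<open>0 \<le> sqrt (2 * real N * energy 0 / k2)\<close> unfolding D_def by simp
  next
    case False
    then have "dinf i j \<le> Max D"
      using Max_ge[OF \<open>finite D\<close>] assms(4,5) unfolding D_def by blast
    then show ?thesis
      using bond_deviation_le[OF assms(3-5) False] unfolding D_def by linarith
  qed
qed

lemma v_tendsto_0:
  assumes "(\<Sum>i<N. v i 0) = 0" "\<And>i j. i < N \<Longrightarrow> j < N \<Longrightarrow> ((\<lambda>t. v j t - v i t) \<longlongrightarrow> 0) at_top"
    and "i < N"
  shows "((\<lambda>t. v i t) \<longlongrightarrow> 0) at_top"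
proof (rule tendsto_norm_zero_cancel, rule tendsto_sandwich[OF _ _ tendsto_const])
  have "((\<lambda>t. norm (v i t - v j t)) \<longlongrightarrow> 0) at_top" if "j < N" for j
    using assms(2)[OF that \<open>i < N\<close>] by (rule tendsto_norm_zero)
  then show "((\<lambda>t. (\<Sum>j<N. norm (v i t - v j t)) / real N) \<longlongrightarrow> 0) at_top"
    by (intro tendsto_divide_zero tendsto_null_sum) auto
  have "norm (v i t) \<le> (\<Sum>j<N. norm (v i t - v j t)) / real N" if "0 \<le> t" for t
    using card_mult_norm_le_sum_norm_diff[of "{..<N}" "\<lambda>j. v j t" i]
      assms(1) momentum_conserved[OF that] \<open>i < N\<close>
    by (simp add: field_simps)
  then show "\<forall>\<^sub>F t in at_top. norm (v i t) \<le> (\<Sum>j<N. norm (v i t - v j t)) / real N"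
    by (auto simp: eventually_at_top_linorder)
qed (simp add: eventually_at_top_linorder)

end

theorem theorem4p2:
  fixes N :: nat and k0 k1 k2 \<psi>M :: real and \<psi> :: "real \<Rightarrow> real"
    and dinf :: "nat \<Rightarrow> nat \<Rightarrow> real"
    and x v :: "nat \<Rightarrow> real \<Rightarrow> 'a::euclidean_space"
  defines "E0 \<equiv> CS_energy N k2 dinf (\<lambda>i. x i 0) (\<lambda>i. v i 0)"
  defines "U \<equiv> Max {dinf i j | i j. i < N \<and> j < N \<and> i \<noteq> j} + sqrt (2 * real N * E0 / k2)"
  assumes N2: "N \<ge> 2"
    and dsym: "\<forall>i<N. \<forall>j<N. dinf i j = dinf j i"
    and ddiag: "\<forall>i<N. dinf i i = 0"
    and psi_lip: "locally_lipschitz_nonneg \<psi>"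
    and psi_bnd: "\<forall>r\<ge>0. 0 \<le> \<psi> r \<and> \<psi> r \<le> \<psi>M"
    and psi_min: "Inf (\<psi> ` {0..U}) > 0"
    and init_sep: "Min {norm (x i 0 - x j 0) | i j. i < N \<and> j < N \<and> i \<noteq> j} > 0"
    and d_large: "Min {dinf i j | i j. i < N \<and> j < N \<and> i \<noteq> j} > sqrt (2 * real N * E0 / k2)"
    and init_S: "Max {norm (x i 0 - x j 0) | i j. i < N \<and> j < N \<and> i \<noteq> j} \<le> U"
    and k0: "k0 > 0" and k1: "k1 > 0" and k2: "k2 > 0"
    and sol: "CS_global_smooth_solution N k0 k1 k2 \<psi> dinf x v"
  shows "(\<exists>B. \<forall>t\<ge>0. Max {norm (x i t - x j t) | i j. i < N \<and> j < N} \<le> B)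
       \<and> ((\<lambda>t. Max {norm (v j t - v i t) | i j. i < N \<and> j < N}) \<longlongrightarrow> 0) at_top
       \<and> ((\<Sum>i<N. v i 0) = 0 \<longrightarrow>
            ((\<lambda>t. Max {norm (v i t) | i. i < N}) \<longlongrightarrow> 0) at_top)"
proof -
  interpret CS_solution N k0 k1 k2 \<psi>M \<psi> dinf x v
    using sol dsym psi_bnd k0 k1 k2 by unfold_locales
  have dist: "norm (x j t - x i t) \<le> U" if "0 \<le> t" "i < N" "j < N" for t i j
    unfolding U_def E0_def using N2 d_large[unfolded E0_def] that by (rule dist_le_max_bond)
  have "bdd_below (\<psi> ` {0..U})"
    using psi_bnd by (intro bdd_belowI2[of _ 0]) auto
  then have \<psi>_lower: "\<forall>t\<ge>0. \<forall>i<N. \<forall>j<N. Inf (\<psi> ` {0..U}) \<le> \<psi> (norm (x j t - x i t))"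
    using dist by (auto intro!: cInf_lower)
  have relative: "((\<lambda>t. v j t - v i t) \<longlongrightarrow> 0) at_top" if "i < N" "j < N" for i j
    using psi_min \<psi>_lower that by (rule relative_velocity_tendsto_0)
  show ?thesis
  proof (intro conjI impI)
    show "\<exists>B. \<forall>t\<ge>0. Max {norm (x i t - x j t) | i j. i < N \<and> j < N} \<le> B"
      using dist N2
      by (intro exI[of _ U] allI impI Max_pair_setcompr_le) (auto simp: norm_minus_commute)
    show "((\<lambda>t. Max {norm (v j t - v i t) | i j. i < N \<and> j < N}) \<longlongrightarrow> 0) at_top"
      using relative N2 by (intro tendsto_Max_pair_setcompr tendsto_norm_zero) auto
    assume "(\<Sum>i<N. v i 0) = 0"
    then have "((\<lambda>t. norm (v i t)) \<longlongrightarrow> 0) at_top" if "i < N" for i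
      using relative that by (intro tendsto_norm_zero v_tendsto_0)
    then show "((\<lambda>t. Max {norm (v i t) | i. i < N}) \<longlongrightarrow> 0) at_top"
      unfolding setcompr_eq_image lessThan_def [symmetric] using N2
      by (intro tendsto_Max_image) (auto simp: lessThan_empty_iff)
  qed
qed

end
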